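(* (a) Let $F=(f^{(1)},f^{(2)},\dots)$ be a non-degenerate circular net with a family of spherical curvature lines, $f^{(j)}$ lying on $s_j$ with $\langle\mathfrak{s}_j,\mathfrak{p}\rangle=-1$. Then there is a lifted-folding of $F$ (namely the one with all folding parameters equal to $-1$) whose result is a circular net all of whose curves lie on one fixed sphere $s$ (namely $s=s_1$); each resulting curve is the image of the corresponding original curve $f^{(j)}$ under a Möbius transformation. (b) Conversely, let $s\in\mathbb{P}(\mathcal{L})$ be a sphere and let $(g^{(1)},g^{(2)},\dots)$ be a sequence of discrete curves on $s$ such that each consecutive pair $(g^{(j)},g^{(j+1)})$ is a Ribaucour pair of $(\mathfrak{s},\mathfrak{m}^{(j,j+1)})$-type for some vectors $\mathfrak{m}^{(j,j+1)}$. Then lifted-foldings of this sequence produce circular nets in 3-space with a family of spherical curvature lines.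
   Context: Light cone model: $\mathbb{R}^{4,2}$ with form $\langle\cdot,\cdot\rangle$ of signature $(4,2)$, light cone $\mathcal{L}$, projectivization $\mathbb{P}(\mathcal{L})$; fixed $\mathfrak{p}$ with $\langle\mathfrak{p},\mathfrak{p}\rangle=-1$; $v\in\mathbb{P}(\mathcal{L})$ with $\langle\mathfrak{v},\mathfrak{p}\rangle=0$ are points of $\mathbb{R}^3\cup\{\infty\}$, the others oriented spheres (including planes); incidence is orthogonality. Inversion in $\mathfrak{a}$ ($\langle\mathfrak{a},\mathfrak{a}\rangle\ne0$): $\sigma_a(x)=x-\frac{2\langle x,\mathfrak{a}\rangle}{\langle\mathfrak{a},\mathfrak{a}\rangle}\mathfrak{a}$; M-inversion if $\mathfrak{a}\perp\mathfrak{p}$; $\sigma_a$ fixes exactly the vectors orthogonal to $\mathfrak{a}$. Discrete curves $f:\mathcal{V}\to\mathbb{P}(\mathcal{L})$ (points, $\mathcal{V}$ consecutive integers). A Ribaucour pair $(f,g)$: for each edge $(ij)$, $f_i,f_j,g_j,g_i$ concircular; then representatives can be chosen with $\mathfrak{f}_i-\mathfrak{f}_j+\mathfrak{g}_j-\mathfrak{g}_i=0$, and the R-evolution map assigns to $(ij)$ the M-inversion in $\mathfrak{r}_{ij}:=\mathfrak{f}_i-\mathfrak{f}_j=\mathfrak{g}_i-\mathfrak{g}_j$ (the unique edge-wise M-inversions mapping $f_i\mapsto f_j$ and $g_i\mapsto g_j$). The pair is of $(\mathfrak{m}^1,\mathfrak{m}^2)$-type if $\mathrm{span}\{\mathfrak{m}^1,\mathfrak{m}^2,\mathfrak{p}\}$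 is 3-dimensional and consists of fixed points of all inversions of the R-evolution map. A circular net with a family of spherical curvature lines is a sequence of curves, consecutive ones forming Ribaucour pairs, each lying on a sphere; non-degenerate if consecutive spheres are distinct. Lifted-folding of such a net with spheres $s_j$ normalized by $\langle\mathfrak{s}_j,\mathfrak{p}\rangle=-1$ and parameters $\lambda_{j,j+1}\in\mathbb{R}$: $\sigma_{12}$ is the inversion in $\mathfrak{s}_1+\lambda_{12}\mathfrak{s}_2-(1+\lambda_{12})\mathfrak{p}$; with $\Phi_j:=\sigma_{j-1,j}\circ\cdots\circ\sigma_{12}$, $\sigma_{j,j+1}$ is the inversion in $\Phi_j(\mathfrak{s}_j)+\lambda_{j,j+1}\Phi_j(\mathfrak{s}_{j+1})-(1+\lambda_{j,j+1})\mathfrak{p}$; the new net is $(f^{(1)},\Phi_2(f^{(2)}),\Phi_3(f^{(3)}),\dots)$. For a sequence of $(\mathfrak{m}^1_{j,j+1},\mathfrak{m}^2_{j,j+1})$-type Ribaucour pairs the folding inversions are equivalently the inversions in $\mathfrak{n}=\mathfrak{m}^1+\tilde\lambda\mathfrak{m}^2+\langle\mathfrak{m}^1+\tilde\lambda\mathfrak{m}^2,\mathfrak{p}\rangle\mathfrak{p}$, $\tilde\lambda\in\mathbb{R}$ (applied iteratively, the complexes being transported by the previously applied inversions). *)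

theory Defs
  imports "HOL-Analysis.Analysis"
begin

text \<open>The light cone model: R^{4,2} is rendered as real^6 with the symmetric
bilinear form of signature (4,2) below.\<close>

type_synonym vec6 = "real ^ 6"

definition lf :: "vec6 \<Rightarrow> vec6 \<Rightarrow> real" where
  "lf x y = x$1*y$1 + x$2*y$2 + x$3*y$3 + x$4*y$4 - x$5*y$5 - x$6*y$6"

definition proj_eq :: "vec6 \<Rightarrow> vec6 \<Rightarrow> bool" where
  "proj_eq x y \<longleftrightarrow> (\<exists>c. c \<noteq> 0 \<and> y = c *\<^sub>R x)"

text \<open>Representatives of points of R^3 \<union> {\<infinity>} and of oriented spheres.\<close>
definition is_point :: "vec6 \<Rightarrow> vec6 \<Rightarrow> bool" where
  "is_point p x \<longleftrightarrow> x \<noteq> 0 \<and> lf x x = 0 \<and> lf x p = 0"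

definition is_sphere :: "vec6 \<Rightarrow> vec6 \<Rightarrow> bool" where
  "is_sphere p s \<longleftrightarrow> s \<noteq> 0 \<and> lf s s = 0 \<and> lf s p \<noteq> 0"

definition inv_in :: "vec6 \<Rightarrow> vec6 \<Rightarrow> vec6" where
  "inv_in a x = x - (2 * lf x a / lf a a) *\<^sub>R a"

definition m_inv_vec :: "vec6 \<Rightarrow> vec6 \<Rightarrow> bool" where
  "m_inv_vec p a \<longleftrightarrow> lf a a \<noteq> 0 \<and> lf a p = 0"

inductive mobius :: "vec6 \<Rightarrow> (vec6 \<Rightarrow> vec6) \<Rightarrow> bool" for p where
  mobius_id: "mobius p id"
| mobius_step: "mobius p T \<Longrightarrow> m_inv_vec p a \<Longrightarrow> mobius p (inv_in a \<circ> T)"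

definition consecutive :: "int set \<Rightarrow> bool" where
  "consecutive V \<longleftrightarrow> V \<noteq> {} \<and> (\<forall>i\<in>V. \<forall>k\<in>V. \<forall>j. i \<le> j \<and> j \<le> k \<longrightarrow> j \<in> V)"

definition is_curve :: "vec6 \<Rightarrow> int set \<Rightarrow> (int \<Rightarrow> vec6) \<Rightarrow> bool" where
  "is_curve p V f \<longleftrightarrow> consecutive V \<and> (\<forall>i\<in>V. is_point p (f i))"

text \<open>Four points of P(L) are concircular iff their representatives are
linearly dependent (span of dimension at most 3).\<close>
definition concircular :: "vec6 \<Rightarrow> vec6 \<Rightarrow> vec6 \<Rightarrow> vec6 \<Rightarrow> bool" where
  "concircular x y z w \<longleftrightarrow>
     (\<exists>a b c d. (a, b, c, d) \<noteq> (0, 0, 0, 0) \<and>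
        a *\<^sub>R x + b *\<^sub>R y + c *\<^sub>R z + d *\<^sub>R w = 0)"

definition rib_pair :: "int set \<Rightarrow> (int \<Rightarrow> vec6) \<Rightarrow> (int \<Rightarrow> vec6) \<Rightarrow> bool" where
  "rib_pair V f g \<longleftrightarrow>
     (\<forall>i. i \<in> V \<and> i + 1 \<in> V \<longrightarrow> concircular (f i) (f (i + 1)) (g (i + 1)) (g i))"

text \<open>Ribaucour pair of (m1,m2)-type: span{m1,m2,p} is 3-dimensional and consists
of fixed points of the edge-wise M-inversions of the R-evolution map (the M-inversions
mapping f_i to f_{i+1} and g_i to g_{i+1}).\<close>
definition rib_type ::
  "vec6 \<Rightarrow> int set \<Rightarrow> (int \<Rightarrow> vec6) \<Rightarrow> (int \<Rightarrow> vec6) \<Rightarrow> vec6 \<Rightarrow> vec6 \<Rightarrow> bool" where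
  "rib_type p V f g m1 m2 \<longleftrightarrow>
     rib_pair V f g \<and> dim {m1, m2, p} = 3 \<and>
     (\<forall>i. i \<in> V \<and> i + 1 \<in> V \<longrightarrow>
        (\<exists>a. m_inv_vec p a \<and> proj_eq (inv_in a (f i)) (f (i + 1)) \<and>
             proj_eq (inv_in a (g i)) (g (i + 1)) \<and>
             (\<forall>x\<in>span {m1, m2, p}. inv_in a x = x)))"

definition circ_net :: "vec6 \<Rightarrow> int set \<Rightarrow> nat \<Rightarrow> (nat \<Rightarrow> int \<Rightarrow> vec6) \<Rightarrow> bool" where
  "circ_net p V N F \<longleftrightarrow>
     (\<forall>j\<in>{1..N}. is_curve p V (F j)) \<and> (\<forall>j\<in>{1..<N}. rib_pair V (F j) (F (Suc j)))"

definition circ_net_sph :: "vec6 \<Rightarrow> int set \<Rightarrow> nat \<Rightarrow> (nat \<Rightarrow> int \<Rightarrow> vec6) \<Rightarrow> bool" where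
  "circ_net_sph p V N F \<longleftrightarrow> circ_net p V N F \<and>
     (\<forall>j\<in>{1..N}. \<exists>t. is_sphere p t \<and> (\<forall>i\<in>V. lf (F j i) t = 0))"

text \<open>Lifted-folding maps: Phi 1 = id, Phi (j+1) = sigma_{j,j+1} o Phi j, where
sigma_{j,j+1} is the inversion in Phi_j(s_j) + lam_j Phi_j(s_{j+1}) - (1+lam_j) p.
Here lam j stands for lambda_{j,j+1}.\<close>
fun fold_map :: "vec6 \<Rightarrow> (nat \<Rightarrow> vec6) \<Rightarrow> (nat \<Rightarrow> real) \<Rightarrow> nat \<Rightarrow> vec6 \<Rightarrow> vec6" where
  "fold_map p s lam 0 = id"
| "fold_map p s lam (Suc j) =
     (if j = 0 then id
      else inv_in (fold_map p s lam j (s j) + lam j *\<^sub>R fold_map p s lam j (s (Suc j))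
                   - (1 + lam j) *\<^sub>R p) \<circ> fold_map p s lam j)"

definition lifted_folding ::
  "vec6 \<Rightarrow> (nat \<Rightarrow> vec6) \<Rightarrow> (nat \<Rightarrow> real) \<Rightarrow> (nat \<Rightarrow> int \<Rightarrow> vec6) \<Rightarrow> nat \<Rightarrow> int \<Rightarrow> vec6" where
  "lifted_folding p s lam F j = fold_map p s lam j \<circ> F j"

text \<open>Folding for sequences of (m1,m2)-type Ribaucour pairs: iterated inversions in
n_j = Psi_j(m1_j + lt_j m2_j) + <Psi_j(m1_j + lt_j m2_j), p> p, where Psi_j is
the composition of the previously applied inversions (Psi_1 = id).\<close>
definition nvec :: "vec6 \<Rightarrow> vec6 \<Rightarrow> vec6" where
  "nvec p x = x + lf x p *\<^sub>R p"

fun mfold_map ::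
  "vec6 \<Rightarrow> (nat \<Rightarrow> vec6) \<Rightarrow> (nat \<Rightarrow> vec6) \<Rightarrow> (nat \<Rightarrow> real) \<Rightarrow> nat \<Rightarrow> vec6 \<Rightarrow> vec6" where
  "mfold_map p m1 m2 lt 0 = id"
| "mfold_map p m1 m2 lt (Suc j) =
     (if j = 0 then id
      else inv_in (nvec p (mfold_map p m1 m2 lt j (m1 j + lt j *\<^sub>R m2 j))) \<circ> mfold_map p m1 m2 lt j)"

definition mfold_vec :: "vec6 \<Rightarrow> (nat \<Rightarrow> vec6) \<Rightarrow> (nat \<Rightarrow> vec6) \<Rightarrow> (nat \<Rightarrow> real) \<Rightarrow> nat \<Rightarrow> vec6" where
  "mfold_vec p m1 m2 lt j = nvec p (mfold_map p m1 m2 lt j (m1 j + lt j *\<^sub>R m2 j))"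

definition mfolding ::
  "vec6 \<Rightarrow> (nat \<Rightarrow> vec6) \<Rightarrow> (nat \<Rightarrow> vec6) \<Rightarrow> (nat \<Rightarrow> real) \<Rightarrow> (nat \<Rightarrow> int \<Rightarrow> vec6) \<Rightarrow> nat \<Rightarrow> int \<Rightarrow> vec6" where
  "mfolding p m1 m2 lt G j = mfold_map p m1 m2 lt j \<circ> G j"

end

theory Submission
  imports Defs
begin

(* Part (a): with all folding parameters equal to -1, the folding inversion sigma_{j,j+1} is the
   inversion in Phi_j(s_j) - Phi_j(s_{j+1}).  The difference of two null vectors with equal pairing
   against p is an M-inversion vector, and its inversion swaps the two vectors; hence inductively
   Phi_j(s_j) = s_1, so every folded curve lies on s_1.  Ribaucour pairs survive because the
   inversion in s_j - s_{j+1} moves a point g of s_{j+1} by a multiple of <g, s_j> only, and a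
   linear relation between f_i, f_{i+1} (on s_j) and g_{i+1}, g_i (on s_{j+1}), paired with s_j,
   makes the corresponding combination of these multiples vanish.

   Part (b): each folding inversion is the inversion in the transported image of a vector of the
   complex span{s, m, p}, which the edge inversions of the R-evolution map fix.  Orthogonal
   inversions commute, so every edge quadrilateral keeps the shape x, sigma x, sigma y, y up to
   scaling, and such four vectors are always linearly dependent. *)

lemma lf_commute: "lf x y = lf y x"
  unfolding lf_def by (simp add: mult.commute)

lemma lf_add_left [simp]: "lf (x + y) z = lf x z + lf y z"
  and lf_add_right [simp]: "lf z (x + y) = lf z x + lf z y"
  and lf_diff_left [simp]: "lf (x - y) z = lf x z - lf y z"
  and lf_diff_right [simp]: "lf z (x - y) = lf z x - lf z y"
  and lf_scaleR_left [simp]: "lf (c *\<^sub>R x) z = c * lf x z"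
  and lf_scaleR_right [simp]: "lf z (c *\<^sub>R x) = c * lf z x"
  and lf_zero_left [simp]: "lf 0 z = 0"
  and lf_zero_right [simp]: "lf z 0 = 0"
  unfolding lf_def by (simp_all add: algebra_simps)

lemma linear_inv_in: "linear (inv_in a)"
  unfolding linear_iff inv_in_def by (simp add: algebra_simps add_divide_distrib)

lemma lf_inv_in:
  assumes "lf a a \<noteq> 0"
  shows "lf (inv_in a x) (inv_in a y) = lf x y"
proof -
  define u v where "u = 2 * lf x a / lf a a" and "v = 2 * lf y a / lf a a"
  have "lf (inv_in a x) (inv_in a y) = lf x y - v * lf x a - u * lf y a + u * v * lf a a"
    unfolding inv_in_def u_def[symmetric] v_def[symmetric]
    by (simp add: lf_commute[of a y] algebra_simps)
  also have "\<dots> = lf x y"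
    using assms unfolding u_def v_def by (simp add: field_simps)
  finally show ?thesis .
qed

lemma inv_in_inv_in:
  assumes "lf a a \<noteq> 0"
  shows "inv_in a (inv_in a x) = x"
  using assms unfolding inv_in_def by (simp add: field_simps)

lemma inv_in_eq_self_iff:
  assumes "lf a a \<noteq> 0"
  shows "inv_in a x = x \<longleftrightarrow> lf x a = 0"
proof -
  from assms have "a \<noteq> 0" by auto
  with assms show ?thesis unfolding inv_in_def by auto
qed

lemma inv_in_commute:
  assumes "lf a b = 0"
  shows "inv_in a (inv_in b x) = inv_in b (inv_in a x)"
proof -
  define u v where "u = 2 * lf x b / lf b b" and "v = 2 * lf x a / lf a a"
  have shift_b: "lf (x - u *\<^sub>R b) a = lf x a" and shift_a: "lf (x - v *\<^sub>R a) b = lf x b"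
    using assms by (simp_all add: lf_commute[of b a])
  show ?thesis
    unfolding inv_in_def u_def[symmetric] v_def[symmetric] shift_a shift_b
    by (simp add: algebra_simps)
qed

lemma inv_in_diff_null:
  assumes "lf x x = 0" and "lf y y = 0" and "lf x y \<noteq> 0"
  shows "inv_in (x - y) y = x"
  using assms unfolding inv_in_def by (simp add: lf_commute[of y x])

definition isometry_fixing :: "vec6 \<Rightarrow> (vec6 \<Rightarrow> vec6) \<Rightarrow> bool" where
  "isometry_fixing p T \<longleftrightarrow> linear T \<and> inj T \<and> (\<forall>x y. lf (T x) (T y) = lf x y) \<and> T p = p"

lemma isometry_fixing_lf: "isometry_fixing p T \<Longrightarrow> lf (T x) (T y) = lf x y"
  unfolding isometry_fixing_def by blast

lemma isometry_fixing_linear: "isometry_fixing p T \<Longrightarrow> linear T"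
  unfolding isometry_fixing_def by blast

lemma isometry_fixing_inv_in: "m_inv_vec p a \<Longrightarrow> isometry_fixing p (inv_in a)"
  unfolding isometry_fixing_def m_inv_vec_def
  by (metis linear_inv_in lf_inv_in inv_in_inv_in inv_in_eq_self_iff inj_on_inverseI lf_commute)

lemma mobius_isometry_fixing: "mobius p T \<Longrightarrow> isometry_fixing p T"
proof (induction rule: mobius.induct)
  case mobius_id
  show ?case by (simp add: isometry_fixing_def linear_id[unfolded id_def])
next
  case (mobius_step T a)
  with isometry_fixing_inv_in[OF mobius_step.hyps(2)] show ?case
    unfolding isometry_fixing_def by (simp add: linear_compose inj_compose)
qed

lemma isometry_fixing_inv_in_image:
  assumes "isometry_fixing p T"
  shows "T (inv_in a x) = inv_in (T a) (T x)"
  using assms unfolding inv_in_def isometry_fixing_def by (simp add: linear_diff linear_scale)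

lemma isometry_fixing_nvec:
  assumes "isometry_fixing p T"
  shows "T (nvec p x) = nvec p (T x)"
  using assms unfolding nvec_def isometry_fixing_def by (metis linear_add linear_scale)

lemma isometry_fixing_curve:
  assumes "isometry_fixing p T" and "is_curve p V f"
  shows "is_curve p V (T \<circ> f)"
  using assms unfolding is_curve_def is_point_def isometry_fixing_def
  by (metis comp_apply linear_inj_iff_eq_0)

lemma isometry_fixing_sphere:
  assumes "isometry_fixing p T" and "is_sphere p t"
  shows "is_sphere p (T t)"
  using assms unfolding is_sphere_def isometry_fixing_def
  by (metis linear_inj_iff_eq_0)

lemma concircular_linear_image:
  assumes "linear T" and "concircular x y z w"
  shows "concircular (T x) (T y) (T z) (T w)"
proof -
  obtain a b c d where nz: "(a, b, c, d) \<noteq> (0, 0, 0, 0)"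
    and rel: "a *\<^sub>R x + b *\<^sub>R y + c *\<^sub>R z + d *\<^sub>R w = 0"
    using assms(2) unfolding concircular_def by blast
  have "a *\<^sub>R T x + b *\<^sub>R T y + c *\<^sub>R T z + d *\<^sub>R T w = T (a *\<^sub>R x + b *\<^sub>R y + c *\<^sub>R z + d *\<^sub>R w)"
    by (simp add: linear_add[OF assms(1)] linear_scale[OF assms(1)])
  with rel have "a *\<^sub>R T x + b *\<^sub>R T y + c *\<^sub>R T z + d *\<^sub>R T w = 0"
    by (simp add: linear_0[OF assms(1)])
  with nz show ?thesis unfolding concircular_def by blast
qed

lemma concircular_inv_in_diff:
  assumes "concircular f1 f2 g2 g1"
    and "lf f1 u = 0" "lf f2 u = 0" "lf g1 v = 0" "lf g2 v = 0"
  shows "concircular f1 f2 (inv_in (u - v) g2) (inv_in (u - v) g1)"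
proof -
  obtain a b c d where nz: "(a, b, c, d) \<noteq> (0, 0, 0, 0)"
    and rel: "a *\<^sub>R f1 + b *\<^sub>R f2 + c *\<^sub>R g2 + d *\<^sub>R g1 = 0"
    using assms(1) unfolding concircular_def by blast
  define L where "L = lf (u - v) (u - v)"
  have "lf (a *\<^sub>R f1 + b *\<^sub>R f2 + c *\<^sub>R g2 + d *\<^sub>R g1) u = 0"
    using rel by simp
  then have paired: "c * lf g2 u + d * lf g1 u = 0"
    using assms(2,3) by simp
  have shift: "inv_in (u - v) g = g - (2 * lf g u / L) *\<^sub>R (u - v)" if "lf g v = 0" for g
    using that unfolding inv_in_def L_def by simp
  have "a *\<^sub>R f1 + b *\<^sub>R f2 + c *\<^sub>R inv_in (u - v) g2 + d *\<^sub>R inv_in (u - v) g1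
      = (a *\<^sub>R f1 + b *\<^sub>R f2 + c *\<^sub>R g2 + d *\<^sub>R g1)
        - (2 * (c * lf g2 u + d * lf g1 u) / L) *\<^sub>R (u - v)"
    unfolding shift[OF assms(4)] shift[OF assms(5)]
    by (simp add: algebra_simps add_divide_distrib)
  also have "\<dots> = 0"
    using rel paired by simp
  finally show ?thesis
    using nz unfolding concircular_def by blast
qed

lemma concircular_inv_in_pairs:
  assumes "x2 = \<alpha> *\<^sub>R inv_in c x1" and "x3 = \<beta> *\<^sub>R inv_in c x4" and "\<alpha> \<noteq> 0" and "\<beta> \<noteq> 0"
  shows "concircular x1 x2 x3 x4"
proof -
  define u where "u = 2 * lf x1 c / lf c c"
  define w where "w = 2 * lf x4 c / lf c c"
  have x2: "x2 = \<alpha> *\<^sub>R (x1 - u *\<^sub>R c)" and x3: "x3 = \<beta> *\<^sub>R (x4 - w *\<^sub>R c)"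
    using assms(1,2) unfolding inv_in_def u_def w_def by simp_all
  show ?thesis
  proof (cases "u = 0")
    case True
    have "\<alpha> *\<^sub>R x1 + (-1) *\<^sub>R x2 + 0 *\<^sub>R x3 + 0 *\<^sub>R x4 = 0"
      by (simp add: x2 True)
    moreover have "(\<alpha>, -1, 0, 0) \<noteq> (0 :: real, 0 :: real, 0 :: real, 0 :: real)"
      by simp
    ultimately show ?thesis
      unfolding concircular_def by blast
  next
    case False
    have "(- w / \<alpha>) *\<^sub>R x2 = (- w) *\<^sub>R (x1 - u *\<^sub>R c)"
      and "(u / \<beta>) *\<^sub>R x3 = u *\<^sub>R (x4 - w *\<^sub>R c)"
      using assms(3,4) by (simp_all add: x2 x3)
    then have "w *\<^sub>R x1 + (- w / \<alpha>) *\<^sub>R x2 + (u / \<beta>) *\<^sub>R x3 + (- u) *\<^sub>R x4 = 0"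
      by (simp add: algebra_simps)
    moreover have "(w, - w / \<alpha>, u / \<beta>, - u) \<noteq> (0, 0, 0, 0)"
      using False by simp
    ultimately show ?thesis
      unfolding concircular_def by blast
  qed
qed

lemma fold_map_neg1_Suc:
  assumes "j \<noteq> 0" and "isometry_fixing p (fold_map p s (\<lambda>_. -1) j)"
  shows "fold_map p s (\<lambda>_. -1) (Suc j) x
       = fold_map p s (\<lambda>_. -1) j (inv_in (s j - s (Suc j)) x)"
proof -
  let ?\<Phi> = "fold_map p s (\<lambda>_. -1) j"
  have "fold_map p s (\<lambda>_. -1) (Suc j) x = inv_in (?\<Phi> (s j) - ?\<Phi> (s (Suc j))) (?\<Phi> x)"
    using assms(1) by simp
  also have "\<dots> = inv_in (?\<Phi> (s j - s (Suc j))) (?\<Phi> x)"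
    using assms(2) by (simp add: linear_diff isometry_fixing_linear)
  finally show ?thesis
    using isometry_fixing_inv_in_image[OF assms(2)] by simp
qed

lemma fold_map_neg1_mobius_first_sphere:
  assumes spheres: "\<forall>j\<in>{1..N}. lf (s j) (s j) = 0 \<and> lf (s j) p = -1"
    and adjacent: "\<forall>j\<in>{1..<N}. lf (s j) (s (Suc j)) \<noteq> 0"
    and "1 \<le> j" and "j \<le> N"
  shows "mobius p (fold_map p s (\<lambda>_. -1) j) \<and> fold_map p s (\<lambda>_. -1) j (s j) = s 1"
  using assms(3,4)
proof (induction j)
  case 0
  then show ?case by simp
next
  case (Suc j)
  show ?case
  proof (cases "j = 0")
    case True
    then show ?thesis using mobius_id[of p] by (simp add: id_def)
  next
    case False
    define T where "T = fold_map p s (\<lambda>_. -1) j"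
    have IH: "mobius p T" "T (s j) = s 1"
      using Suc False unfolding T_def by auto
    have T: "lf (T x) (T y) = lf x y" for x y
      using mobius_isometry_fixing[OF IH(1)] by (rule isometry_fixing_lf)
    have T_p: "lf (T x) p = lf x p" for x
      using T[of x p] mobius_isometry_fixing[OF IH(1)] unfolding isometry_fixing_def by simp
    have j: "j \<in> {1..<N}" "j \<in> {1..N}" "Suc j \<in> {1..N}"
      using Suc.prems False by auto
    define a where "a = T (s j) - T (s (Suc j))"
    have "lf a a \<noteq> 0" and "lf a p = 0"
      using spheres adjacent j unfolding a_def
      by (simp_all add: T T_p lf_commute[of "s (Suc j)" "s j"])
    then have "mobius p (inv_in a \<circ> T)"
      using IH(1) by (simp add: mobius_step m_inv_vec_def)
    moreover have "inv_in a (T (s (Suc j))) = s 1"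
      unfolding a_def IH(2)[symmetric]
      by (rule inv_in_diff_null) (use spheres adjacent j in \<open>simp_all add: T\<close>)
    moreover have "fold_map p s (\<lambda>_. -1) (Suc j) = inv_in a \<circ> T"
      using False unfolding T_def a_def by simp
    ultimately show ?thesis
      by (metis comp_apply)
  qed
qed

lemma circ_net_lifted_folding_neg1:
  assumes net: "circ_net p V N F"
    and spheres: "\<forall>j\<in>{1..N}. lf (s j) (s j) = 0 \<and> lf (s j) p = -1"
    and adjacent: "\<forall>j\<in>{1..<N}. lf (s j) (s (Suc j)) \<noteq> 0"
    and on_spheres: "\<forall>j\<in>{1..N}. \<forall>i\<in>V. lf (F j i) (s j) = 0"
  shows "circ_net p V N (lifted_folding p s (\<lambda>_. -1) F)"
proof -
  let ?\<Phi> = "fold_map p s (\<lambda>_. -1)"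
  have iso: "isometry_fixing p (?\<Phi> j)" if "j \<in> {1..N}" for j
    using fold_map_neg1_mobius_first_sphere[OF spheres adjacent] mobius_isometry_fixing that
    by simp
  have "is_curve p V (lifted_folding p s (\<lambda>_. -1) F j)" if "j \<in> {1..N}" for j
    using isometry_fixing_curve[OF iso] net that
    unfolding circ_net_def lifted_folding_def by blast
  moreover have "rib_pair V (lifted_folding p s (\<lambda>_. -1) F j)
                            (lifted_folding p s (\<lambda>_. -1) F (Suc j))"
    if j: "j \<in> {1..<N}" for j
    unfolding rib_pair_def
  proof (intro allI impI)
    fix i
    assume i: "i \<in> V \<and> i + 1 \<in> V"
    let ?\<sigma> = "inv_in (s j - s (Suc j))"
    have "concircular (F j i) (F j (i + 1)) (F (Suc j) (i + 1)) (F (Suc j) i)"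
      using net j i unfolding circ_net_def rib_pair_def by blast
    then have "concircular (F j i) (F j (i + 1)) (?\<sigma> (F (Suc j) (i + 1))) (?\<sigma> (F (Suc j) i))"
      by (rule concircular_inv_in_diff) (use on_spheres j i in auto)
    then have "concircular (?\<Phi> j (F j i)) (?\<Phi> j (F j (i + 1)))
                 (?\<Phi> j (?\<sigma> (F (Suc j) (i + 1)))) (?\<Phi> j (?\<sigma> (F (Suc j) i)))"
      using j iso[of j] isometry_fixing_linear concircular_linear_image by simp
    then show "concircular (lifted_folding p s (\<lambda>_. -1) F j i)
                 (lifted_folding p s (\<lambda>_. -1) F j (i + 1))
                 (lifted_folding p s (\<lambda>_. -1) F (Suc j) (i + 1))
                 (lifted_folding p s (\<lambda>_. -1) F (Suc j) i)"
      using j iso[of j] unfolding lifted_folding_def comp_apply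
      by (subst (1 2) fold_map_neg1_Suc) auto
  qed
  ultimately show ?thesis
    unfolding circ_net_def by blast
qed

lemma lifted_folding_neg1_on_first_sphere:
  assumes spheres: "\<forall>j\<in>{1..N}. lf (s j) (s j) = 0 \<and> lf (s j) p = -1"
    and adjacent: "\<forall>j\<in>{1..<N}. lf (s j) (s (Suc j)) \<noteq> 0"
    and on_sphere: "\<forall>i\<in>V. lf (F j i) (s j) = 0"
    and "j \<in> {1..N}" and "i \<in> V"
  shows "lf (lifted_folding p s (\<lambda>_. -1) F j i) (s 1) = 0"
proof -
  from fold_map_neg1_mobius_first_sphere[OF spheres adjacent] assms(4)
  have "mobius p (fold_map p s (\<lambda>_. -1) j)" and "fold_map p s (\<lambda>_. -1) j (s j) = s 1"
    by auto
  with on_sphere assms(5) show ?thesis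
    unfolding lifted_folding_def by (metis comp_apply isometry_fixing_lf mobius_isometry_fixing)
qed

lemma lf_nvec_p: "lf p p = -1 \<Longrightarrow> lf (nvec p x) p = 0"
  unfolding nvec_def by simp

lemma nvec_in_span: "x \<in> span S \<Longrightarrow> p \<in> S \<Longrightarrow> nvec p x \<in> span S"
  unfolding nvec_def by (simp add: span_add span_scale span_base)

lemma mfold_map_mobius:
  assumes "\<forall>j\<in>{1..<N}. m_inv_vec p (mfold_vec p m1 m2 lt j)" and "j \<le> N"
  shows "mobius p (mfold_map p m1 m2 lt j)"
  using assms(2)
proof (induction j)
  case 0
  then show ?case using mobius_id[of p] by (simp add: id_def)
next
  case (Suc j)
  show ?case
  proof (cases "j = 0")
    case True
    then show ?thesis using mobius_id[of p] by (simp add: id_def)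
  next
    case False
    then have "m_inv_vec p (mfold_vec p m1 m2 lt j)" and "mobius p (mfold_map p m1 m2 lt j)"
      using assms(1) Suc by auto
    moreover have "mfold_map p m1 m2 lt (Suc j) = inv_in (mfold_vec p m1 m2 lt j) \<circ> mfold_map p m1 m2 lt j"
      using False by (simp add: mfold_vec_def)
    ultimately show ?thesis
      by (simp only: mobius_step)
  qed
qed

lemma rib_type_inv_in_span_rib_pair:
  assumes T: "isometry_fixing p T" and rt: "rib_type p V f g m1 m2"
    and z: "z \<in> span {m1, m2, p}"
  shows "rib_pair V (T \<circ> f) (inv_in (T z) \<circ> T \<circ> g)"
  unfolding rib_pair_def
proof (intro allI impI)
  fix i
  assume "i \<in> V \<and> i + 1 \<in> V"
  then obtain a where a: "m_inv_vec p a"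
      "proj_eq (inv_in a (f i)) (f (i + 1))" "proj_eq (inv_in a (g i)) (g (i + 1))"
      "\<forall>x\<in>span {m1, m2, p}. inv_in a x = x"
    using rt unfolding rib_type_def by blast
  obtain \<alpha> \<beta> where \<alpha>: "\<alpha> \<noteq> 0" "f (i + 1) = \<alpha> *\<^sub>R inv_in a (f i)"
      and \<beta>: "\<beta> \<noteq> 0" "g (i + 1) = \<beta> *\<^sub>R inv_in a (g i)"
    using a(2,3) unfolding proj_eq_def by blast
  have "lf (T z) (T a) = 0"
    using a(1,4) z inv_in_eq_self_iff isometry_fixing_lf[OF T]
    unfolding m_inv_vec_def by auto
  note commute = inv_in_commute[OF this]
  have lin: "linear T"
    using T by (rule isometry_fixing_linear)
  have "T (f (i + 1)) = \<alpha> *\<^sub>R inv_in (T a) (T (f i))"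
    by (simp add: \<alpha>(2) linear_scale[OF lin] isometry_fixing_inv_in_image[OF T])
  moreover have "inv_in (T z) (T (g (i + 1)))
      = \<beta> *\<^sub>R inv_in (T a) (inv_in (T z) (T (g i)))"
    by (simp add: \<beta>(2) linear_scale[OF lin] linear_scale[OF linear_inv_in]
        isometry_fixing_inv_in_image[OF T] commute)
  ultimately show "concircular ((T \<circ> f) i) ((T \<circ> f) (i + 1))
                     ((inv_in (T z) \<circ> T \<circ> g) (i + 1)) ((inv_in (T z) \<circ> T \<circ> g) i)"
    unfolding comp_apply using \<alpha>(1) \<beta>(1) by (rule concircular_inv_in_pairs)
qed

lemma mfolding_circ_net_sph:
  assumes "lf p p = -1" and sphere: "is_sphere p s"
    and curves: "\<forall>j\<in>{1..N}. is_curve p V (G j) \<and> (\<forall>i\<in>V. lf (G j i) s = 0)"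
    and rib: "\<forall>j\<in>{1..<N}. rib_type p V (G j) (G (Suc j)) s (m j)"
    and nondeg: "\<forall>j\<in>{1..<N}. lf (mfold_vec p (\<lambda>_. s) m lt j) (mfold_vec p (\<lambda>_. s) m lt j) \<noteq> 0"
  shows "circ_net_sph p V N (mfolding p (\<lambda>_. s) m lt G)"
proof -
  let ?\<Psi> = "mfold_map p (\<lambda>_. s) m lt"
  have "\<forall>j\<in>{1..<N}. m_inv_vec p (mfold_vec p (\<lambda>_. s) m lt j)"
    using nondeg lf_nvec_p[OF assms(1)] unfolding m_inv_vec_def mfold_vec_def by simp
  then have iso: "isometry_fixing p (?\<Psi> j)" if "j \<le> N" for j
    using mfold_map_mobius mobius_isometry_fixing that by blast
  have "is_curve p V (mfolding p (\<lambda>_. s) m lt G j)" if "j \<in> {1..N}" for j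
    using isometry_fixing_curve[OF iso] curves that unfolding mfolding_def by auto
  moreover have "rib_pair V (mfolding p (\<lambda>_. s) m lt G j) (mfolding p (\<lambda>_. s) m lt G (Suc j))"
    if j: "j \<in> {1..<N}" for j
  proof -
    have "nvec p (s + lt j *\<^sub>R m j) \<in> span {s, m j, p}"
      by (intro nvec_in_span span_add span_scale span_base) auto
    moreover have "isometry_fixing p (?\<Psi> j)"
      using j by (intro iso) simp
    ultimately have "rib_pair V (?\<Psi> j \<circ> G j)
        (inv_in (?\<Psi> j (nvec p (s + lt j *\<^sub>R m j))) \<circ> ?\<Psi> j \<circ> G (Suc j))"
      using j rib rib_type_inv_in_span_rib_pair by blast
    moreover have "?\<Psi> (Suc j) = inv_in (?\<Psi> j (nvec p (s + lt j *\<^sub>R m j))) \<circ> ?\<Psi> j"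
      using j isometry_fixing_nvec[OF \<open>isometry_fixing p (?\<Psi> j)\<close>] by simp
    ultimately show ?thesis
      unfolding mfolding_def by (simp only: comp_assoc)
  qed
  moreover have "is_sphere p (?\<Psi> j s) \<and> (\<forall>i\<in>V. lf (mfolding p (\<lambda>_. s) m lt G j i) (?\<Psi> j s) = 0)"
    if "j \<in> {1..N}" for j
    using isometry_fixing_sphere[OF iso sphere] isometry_fixing_lf[OF iso] curves that
    unfolding mfolding_def by auto
  ultimately show ?thesis
    unfolding circ_net_sph_def circ_net_def by blast
qed

theorem corollary2p9:
  shows
  "(\<forall>p V N F s.
      lf p p = -1 \<and>
      circ_net p V N F \<and>
      (\<forall>j\<in>{1..N}. is_sphere p (s j) \<and> lf (s j) p = -1 \<and> (\<forall>i\<in>V. lf (F j i) (s j) = 0)) \<and>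
      (\<forall>j\<in>{1..<N}. \<not> proj_eq (s j) (s (Suc j))) \<and>
      (\<forall>j\<in>{1..<N}. lf (s j) (s (Suc j)) \<noteq> 0)
    \<longrightarrow>
      circ_net p V N (lifted_folding p s (\<lambda>_. -1) F) \<and>
      (\<forall>j\<in>{1..N}. \<forall>i\<in>V. lf (lifted_folding p s (\<lambda>_. -1) F j i) (s 1) = 0) \<and>
      (\<forall>j\<in>{1..N}. \<exists>T. mobius p T \<and>
          (\<forall>i\<in>V. proj_eq (T (F j i)) (lifted_folding p s (\<lambda>_. -1) F j i))))
   \<and>
   (\<forall>p V N s G m.
      lf p p = -1 \<and> is_sphere p s \<and>
      (\<forall>j\<in>{1..N}. is_curve p V (G j) \<and> (\<forall>i\<in>V. lf (G j i) s = 0)) \<and>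
      (\<forall>j\<in>{1..<N}. rib_type p V (G j) (G (Suc j)) s (m j))
    \<longrightarrow>
      (\<forall>lt. (\<forall>j\<in>{1..<N}. lf (mfold_vec p (\<lambda>_. s) m lt j) (mfold_vec p (\<lambda>_. s) m lt j) \<noteq> 0)
         \<longrightarrow> circ_net_sph p V N (mfolding p (\<lambda>_. s) m lt G)))"
proof (intro conjI allI impI; elim conjE)
  fix p V N F s
  assume net: "circ_net p V N F"
    and spheres: "\<forall>j\<in>{1..N}. is_sphere p (s j) \<and> lf (s j) p = -1 \<and> (\<forall>i\<in>V. lf (F j i) (s j) = 0)"
    and adjacent: "\<forall>j\<in>{1..<N}. lf (s j) (s (Suc j)) \<noteq> 0"
  have normalized: "\<forall>j\<in>{1..N}. lf (s j) (s j) = 0 \<and> lf (s j) p = -1"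
    using spheres unfolding is_sphere_def by blast
  show "circ_net p V N (lifted_folding p s (\<lambda>_. -1) F)"
    using circ_net_lifted_folding_neg1[OF net normalized adjacent] spheres by blast
  show "\<forall>j\<in>{1..N}. \<forall>i\<in>V. lf (lifted_folding p s (\<lambda>_. -1) F j i) (s 1) = 0"
    using lifted_folding_neg1_on_first_sphere[OF normalized adjacent] spheres by blast
  show "\<forall>j\<in>{1..N}. \<exists>T. mobius p T \<and> (\<forall>i\<in>V. proj_eq (T (F j i)) (lifted_folding p s (\<lambda>_. -1) F j i))"
    using fold_map_neg1_mobius_first_sphere[OF normalized adjacent]
    unfolding lifted_folding_def proj_eq_def by (metis atLeastAtMost_iff comp_apply scaleR_one one_neq_zero)
next
  fix p V N s G m lt
  assume "lf p p = -1" "is_sphere p s"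
    "\<forall>j\<in>{1..N}. is_curve p V (G j) \<and> (\<forall>i\<in>V. lf (G j i) s = 0)"
    "\<forall>j\<in>{1..<N}. rib_type p V (G j) (G (Suc j)) s (m j)"
    "\<forall>j\<in>{1..<N}. lf (mfold_vec p (\<lambda>_. s) m lt j) (mfold_vec p (\<lambda>_. s) m lt j) \<noteq> 0"
  then show "circ_net_sph p V N (mfolding p (\<lambda>_. s) m lt G)"
    by (rule mfolding_circ_net_sph)
qed

end
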